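(* For any pair of $n$-dimensional nested lattices $\Lambda\subseteq\Lambda_f\subset\mathbb{R}^n$ and any $\mathbf{x}\in\mathbb{R}^n$, $$[Q_{\Lambda_f}(\mathbf{x})]\bmod\Lambda=Q_{\Lambda_f}\big([\mathbf{x}]\bmod\Lambda\big)+Q_{\Lambda}\Big([Q_{\Lambda_f}(\mathbf{x})]\bmod\Lambda+\mathbf{x}-Q_{\Lambda_f}(\mathbf{x})\Big).$$
   Context: For a lattice $L\subset\mathbb{R}^n$ with Voronoi region $\mathcal{V}_L$ (the set of points whose nearest lattice point is $\mathbf{0}$, ties broken systematically so that $\mathcal{V}_L$ is a fundamental domain), $Q_L(\mathbf{y})$ is the unique $\mathbf{t}\in L$ with $\mathbf{y}-\mathbf{t}\in\mathcal{V}_L$, and $[\mathbf{y}]\bmod L=\mathbf{y}-Q_L(\mathbf{y})$. *)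

theory Defs
  imports "HOL-Analysis.Analysis"
begin

definition is_lattice :: "(real ^ 'n) set \<Rightarrow> bool" where
  "is_lattice L \<longleftrightarrow> (\<exists>b :: 'n \<Rightarrow> real ^ 'n. inj b \<and> independent (range b) \<and>
      L = range (\<lambda>z :: 'n \<Rightarrow> int. \<Sum>i\<in>UNIV. of_int (z i) *\<^sub>R b i))"

text \<open>A Voronoi region of L with ties broken systematically: a set contained in the
closed Voronoi cell (all points whose nearest lattice point is 0) that is a
fundamental domain of L.\<close>
definition is_voronoi_region :: "(real ^ 'n) set \<Rightarrow> (real ^ 'n) set \<Rightarrow> bool" where
  "is_voronoi_region L V \<longleftrightarrow>
     V \<subseteq> {y. \<forall>t\<in>L. norm y \<le> norm (y - t)} \<and>
     (\<forall>y. \<exists>!t. t \<in> L \<and> y - t \<in> V)"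

definition quant :: "(real ^ 'n) set \<Rightarrow> (real ^ 'n) set \<Rightarrow> real ^ 'n \<Rightarrow> real ^ 'n" where
  "quant L V y = (THE t. t \<in> L \<and> y - t \<in> V)"

definition lmod :: "(real ^ 'n) set \<Rightarrow> (real ^ 'n) set \<Rightarrow> real ^ 'n \<Rightarrow> real ^ 'n" where
  "lmod L V y = y - quant L V y"

end

theory Submission
  imports Defs
begin

text \<open>A quantizer commutes with translations by points of its lattice, and the coarse
lattice lies in the fine one. With q = Q_f(x), t = Q(x) and s = Q(q), the first summand on
the right is Q_f(x - t) = q - t, and the argument of the second quantizer is x - s, whose
quantization is t - s; the sum is q - s, the left-hand side.\<close>

lemma is_lattice_diff:
  fixes L :: "(real ^ 'n) set"
  assumes "is_lattice L" "a \<in> L" "b \<in> L"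
  shows "a - b \<in> L"
proof -
  obtain g :: "'n \<Rightarrow> real ^ 'n"
    where L: "L = range (\<lambda>z :: 'n \<Rightarrow> int. \<Sum>i\<in>UNIV. of_int (z i) *\<^sub>R g i)"
    using assms(1) unfolding is_lattice_def by blast
  obtain za zb where "a = (\<Sum>i\<in>UNIV. of_int (za i) *\<^sub>R g i)" "b = (\<Sum>i\<in>UNIV. of_int (zb i) *\<^sub>R g i)"
    using assms(2,3) L by blast
  then have "a - b = (\<Sum>i\<in>UNIV. of_int (za i - zb i) *\<^sub>R g i)"
    by (simp add: sum_subtractf[symmetric] scaleR_diff_left)
  then show ?thesis
    unfolding L by (rule image_eqI[where x = "\<lambda>i. za i - zb i"]) (rule UNIV_I)
qed

lemma quant_eqI:
  assumes "is_voronoi_region L V" "t \<in> L" "y - t \<in> V"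
  shows "quant L V y = t"
proof -
  have "\<exists>!t. t \<in> L \<and> y - t \<in> V"
    using assms(1) unfolding is_voronoi_region_def by blast
  then show ?thesis
    unfolding quant_def using assms(2,3) by (simp add: the1_equality)
qed

lemma quant_in_lattice_and_residue:
  assumes "is_voronoi_region L V"
  shows "quant L V y \<in> L" "y - quant L V y \<in> V"
proof -
  have "\<exists>!t. t \<in> L \<and> y - t \<in> V"
    using assms unfolding is_voronoi_region_def by blast
  then have "quant L V y \<in> L \<and> y - quant L V y \<in> V"
    unfolding quant_def by (rule theI')
  then show "quant L V y \<in> L" "y - quant L V y \<in> V" by auto
qed

lemma quant_diff_lattice_point:
  assumes "is_lattice L" "is_voronoi_region L V" "t \<in> L"
  shows "quant L V (y - t) = quant L V y - t"
  using quant_in_lattice_and_residue[OF assms(2)]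
  by (intro quant_eqI[OF assms(2)] is_lattice_diff[OF assms(1)] assms(3)) (auto simp: algebra_simps)

theorem lemma5:
  fixes L Lf V Vf :: "(real ^ 'n) set" and x :: "real ^ 'n"
  assumes "is_lattice L" and "is_lattice Lf" and "L \<subseteq> Lf"
    and "is_voronoi_region L V" and "is_voronoi_region Lf Vf"
  shows "lmod L V (quant Lf Vf x) =
         quant Lf Vf (lmod L V x) + quant L V (lmod L V (quant Lf Vf x) + x - quant Lf Vf x)"
proof -
  define q where "q = quant Lf Vf x"
  define s where "s = quant L V q"
  have s: "s \<in> L"
    unfolding s_def by (rule quant_in_lattice_and_residue[OF assms(4)])
  have t: "quant L V x \<in> L"
    by (rule quant_in_lattice_and_residue[OF assms(4)])
  have "quant Lf Vf (x - quant L V x) = q - quant L V x"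
    unfolding q_def using t assms(3) by (intro quant_diff_lattice_point[OF assms(2,5)]) blast
  moreover have "quant L V (q - s + x - q) = quant L V x - s"
    using quant_diff_lattice_point[OF assms(1,4) s] by (simp add: algebra_simps)
  ultimately show ?thesis
    unfolding lmod_def q_def[symmetric] s_def[symmetric] by simp
qed

end
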